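(* Let $\mathcal{C}$ be a permutation class. If there exists a partial multiplication matrix $M$ whose row-column graph is a cycle such that $\mathcal{C}$ contains $M$-coils of arbitrarily large length, then $\mathcal{C}$ is not labelled well quasi-ordered.
   Context: Permutations are identified with their plots; $\sigma\le\pi$ if $\pi$ has a subsequence order-isomorphic to $\sigma$; a permutation class is a containment-closed set. A gridding matrix has entries in $\{0,1,-1\}$; an $m\times n$ one has $m$ columns, $n$ rows, $M_{ij}$ in column $i$ from the left and row $j$ from the bottom. An $M$-gridding of a permutation $\pi$ of length $L$ is a choice of vertical lines $\tfrac12=v_0\le\dots\le v_m=L+\tfrac12$ and horizontal lines $\tfrac12=h_0\le\dots\le h_n=L+\tfrac12$, not through points of $\pi$, such that in each cell $C_{ij}=\{v_{i-1}<x<v_i,\ h_{j-1}<y<h_j\}$ the points of $\pi$ are absent if $M_{ij}=0$, increasing if $M_{ij}=1$, decreasing if $M_{ij}=-1$; this gives an $M$-gridded permutation $\pi^\#$. The row-column graph $G_M$ is the bipartite graph on $\{1,\dots,m\}\cup\{1',\dots,n'\}$ with edge $ij'$ iff $M_{ij}\neq 0$. $M$ is a partial multiplication matrix if there are fixed $c_1,\dots,c_m,r_1,\dots,r_n\in\{\pm1\}$ with $M_{ij}=c_ir_j$ for each non-zero entry. Column $i$ is oriented left-to-right if $c_i=1$, right-to-left otherwise; row $j$ bottom-to-top if $r_j=1$, top-to-bottom otherwise. The orientation digraph $D_{\pi^\#}$ has the points of $\pi^\#$ as vertices, with $x\to y$ whenever $x,y$ lie in a common column of cells and $x$ precedes $y$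 in that column's orientation, or lie in a common row of cells and $x$ precedes $y$ in that row's orientation. Let $\ell$ be the length of the cycle $G_M$. A gridded $M$-coil is an $M$-gridded permutation of length $n>\ell$ with an ordering $v_1,\dots,v_n$ of its points and a labelling of the $\ell$ non-zero cells by $1,\dots,\ell$ such that (C1) $v_i$ lies in cell $i\bmod\ell$ (residues in $\{1,\dots,\ell\}$); (C2) $v_{i-1}\to v_i$ for $1<i\le n$; (C3) $v_i\to v_{i-\ell-1}$ for $\ell+1<i\le n$; (C4) $v_{\ell+1}\to v_1$. An $M$-coil is a permutation having an $M$-gridding which is a gridded $M$-coil; its length is its number of points. A quasi-order is wqo if every infinite sequence has $x_i\le x_j$ for some $i<j$. For a quasi-order $L$, an $L$-labelled permutation is a permutation with a map from its points to $L$; $(\sigma,\ell_\sigma)\le(\pi,\ell_\pi)$ if some embedding of $\sigma$ in $\pi$ maps each point to one whose label is $\ge$ its own. A set of permutations is labelled well quasi-ordered if its set of $L$-labelled elements is wqo for every wqo $L$. *)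

theory Defs
  imports Main
begin

text \<open>A permutation of length L is a list of the values 0..L-1 without repetition.
  Point k (0-based position) has coordinates (k+1, pi!k+1).\<close>
definition is_perm :: "nat list \<Rightarrow> bool" where
  "is_perm p \<longleftrightarrow> distinct p \<and> set p = {0..<length p}"

definition embedding :: "nat list \<Rightarrow> nat list \<Rightarrow> (nat \<Rightarrow> nat) \<Rightarrow> bool" where
  "embedding s p f \<longleftrightarrow>
     (\<forall>i j. i < j \<and> j < length s \<longrightarrow> f i < f j) \<and>
     (\<forall>i < length s. f i < length p) \<and>
     (\<forall>i < length s. \<forall>j < length s. s!i < s!j \<longleftrightarrow> p!(f i) < p!(f j))"

definition contained :: "nat list \<Rightarrow> nat list \<Rightarrow> bool" where
  "contained s p \<longleftrightarrow> (\<exists>f. embedding s p f)"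

definition perm_class :: "nat list set \<Rightarrow> bool" where
  "perm_class C \<longleftrightarrow> (\<forall>p\<in>C. is_perm p) \<and>
     (\<forall>p\<in>C. \<forall>s. is_perm s \<and> contained s p \<longrightarrow> s \<in> C)"

definition quasi_order_on_nat :: "(nat \<Rightarrow> nat \<Rightarrow> bool) \<Rightarrow> bool" where
  "quasi_order_on_nat le \<longleftrightarrow> (\<forall>x. le x x) \<and> (\<forall>x y z. le x y \<longrightarrow> le y z \<longrightarrow> le x z)"

definition good_on :: "'a set \<Rightarrow> ('a \<Rightarrow> 'a \<Rightarrow> bool) \<Rightarrow> bool" where
  "good_on A R \<longleftrightarrow> (\<forall>f :: nat \<Rightarrow> 'a. (\<forall>i. f i \<in> A) \<longrightarrow> (\<exists>i j. i < j \<and> R (f i) (f j)))"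

definition wqo_nat :: "(nat \<Rightarrow> nat \<Rightarrow> bool) \<Rightarrow> bool" where
  "wqo_nat le \<longleftrightarrow> quasi_order_on_nat le \<and> good_on UNIV le"

text \<open>Labelled permutations: a permutation together with a labelling of its points
  (positions 0..length-1; values of the labelling outside this range are irrelevant).\<close>
definition labelled_le :: "(nat \<Rightarrow> nat \<Rightarrow> bool) \<Rightarrow> (nat list \<times> (nat \<Rightarrow> nat)) \<Rightarrow> (nat list \<times> (nat \<Rightarrow> nat)) \<Rightarrow> bool" where
  "labelled_le le sa pb \<longleftrightarrow>
     (\<exists>f. embedding (fst sa) (fst pb) f \<and> (\<forall>i < length (fst sa). le (snd sa i) (snd pb (f i))))"

definition labelled_elems :: "nat list set \<Rightarrow> (nat list \<times> (nat \<Rightarrow> nat)) set" where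
  "labelled_elems C = {(p, a). p \<in> C}"

text \<open>Labelled wqo. Labels are drawn from wqos on nat: any bad sequence uses only countably
  many labels, so this is equivalent to quantifying over all wqos.\<close>
definition labelled_wqo :: "nat list set \<Rightarrow> bool" where
  "labelled_wqo C \<longleftrightarrow> (\<forall>le. wqo_nat le \<longrightarrow> good_on (labelled_elems C) (labelled_le le))"

text \<open>Matrix M with m columns (i = 1..m) and n rows (j = 1..n); column signs c, row signs r.\<close>
definition partial_mult_matrix ::
  "nat \<Rightarrow> nat \<Rightarrow> (nat \<Rightarrow> nat \<Rightarrow> int) \<Rightarrow> (nat \<Rightarrow> int) \<Rightarrow> (nat \<Rightarrow> int) \<Rightarrow> bool" where
  "partial_mult_matrix m n M c r \<longleftrightarrow>
     (\<forall>i\<in>{1..m}. \<forall>j\<in>{1..n}. M i j \<in> {-1, 0, 1}) \<and>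
     (\<forall>i\<in>{1..m}. c i \<in> {-1, 1}) \<and> (\<forall>j\<in>{1..n}. r j \<in> {-1, 1}) \<and>
     (\<forall>i\<in>{1..m}. \<forall>j\<in>{1..n}. M i j \<noteq> 0 \<longrightarrow> M i j = c i * r j)"

text \<open>Row-column graph: vertices Inl i (columns) and Inr j (rows).\<close>
definition rc_vertices :: "nat \<Rightarrow> nat \<Rightarrow> (nat + nat) set" where
  "rc_vertices m n = Inl ` {1..m} \<union> Inr ` {1..n}"

definition rc_edge :: "nat \<Rightarrow> nat \<Rightarrow> (nat \<Rightarrow> nat \<Rightarrow> int) \<Rightarrow> nat + nat \<Rightarrow> nat + nat \<Rightarrow> bool" where
  "rc_edge m n M x y \<longleftrightarrow>
     (\<exists>i\<in>{1..m}. \<exists>j\<in>{1..n}. M i j \<noteq> 0 \<and> ((x = Inl i \<and> y = Inr j) \<or> (x = Inr j \<and> y = Inl i)))"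

definition is_cycle_graph :: "'v set \<Rightarrow> ('v \<Rightarrow> 'v \<Rightarrow> bool) \<Rightarrow> bool" where
  "is_cycle_graph V E \<longleftrightarrow>
     (\<exists>w (k::nat). 3 \<le> k \<and> bij_betw w {0..<k} V \<and>
        (\<forall>x y. E x y \<longleftrightarrow> (\<exists>i<k. (x = w i \<and> y = w ((i+1) mod k)) \<or> (y = w i \<and> x = w ((i+1) mod k)))))"

definition rc_graph_is_cycle :: "nat \<Rightarrow> nat \<Rightarrow> (nat \<Rightarrow> nat \<Rightarrow> int) \<Rightarrow> bool" where
  "rc_graph_is_cycle m n M \<longleftrightarrow> is_cycle_graph (rc_vertices m n) (rc_edge m n M)"

definition nonzero_cells :: "nat \<Rightarrow> nat \<Rightarrow> (nat \<Rightarrow> nat \<Rightarrow> int) \<Rightarrow> (nat \<times> nat) set" where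
  "nonzero_cells m n M = {(i, j). i \<in> {1..m} \<and> j \<in> {1..n} \<and> M i j \<noteq> 0}"

text \<open>Vertical lines: v 0 = 0 <= v 1 <= ... <= v m = L, the line v i standing for x = v i + 1/2.
  Position k (0-based) lies in column i iff v (i-1) <= k < v i; similarly rows with h and values.\<close>
definition in_col :: "(nat \<Rightarrow> nat) \<Rightarrow> nat \<Rightarrow> nat \<Rightarrow> bool" where
  "in_col v i k \<longleftrightarrow> v (i - 1) \<le> k \<and> k < v i"

definition in_row :: "nat list \<Rightarrow> (nat \<Rightarrow> nat) \<Rightarrow> nat \<Rightarrow> nat \<Rightarrow> bool" where
  "in_row p h j k \<longleftrightarrow> h (j - 1) \<le> p!k \<and> p!k < h j"

definition in_cell :: "nat list \<Rightarrow> (nat \<Rightarrow> nat) \<Rightarrow> (nat \<Rightarrow> nat) \<Rightarrow> nat \<times> nat \<Rightarrow> nat \<Rightarrow> bool" where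
  "in_cell p v h ij k \<longleftrightarrow> in_col v (fst ij) k \<and> in_row p h (snd ij) k"

definition is_gridding ::
  "nat \<Rightarrow> nat \<Rightarrow> (nat \<Rightarrow> nat \<Rightarrow> int) \<Rightarrow> nat list \<Rightarrow> (nat \<Rightarrow> nat) \<Rightarrow> (nat \<Rightarrow> nat) \<Rightarrow> bool" where
  "is_gridding m n M p v h \<longleftrightarrow>
     v 0 = 0 \<and> v m = length p \<and> (\<forall>i<m. v i \<le> v (Suc i)) \<and>
     h 0 = 0 \<and> h n = length p \<and> (\<forall>j<n. h j \<le> h (Suc j)) \<and>
     (\<forall>i\<in>{1..m}. \<forall>j\<in>{1..n}. \<forall>k<length p. \<forall>k'<length p.
        in_cell p v h (i, j) k \<and> in_cell p v h (i, j) k' \<longrightarrow>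
          (M i j = 0 \<longrightarrow> False) \<and>
          (M i j = 1 \<longrightarrow> (k < k' \<longrightarrow> p!k < p!k')) \<and>
          (M i j = -1 \<longrightarrow> (k < k' \<longrightarrow> p!k > p!k')))"

definition orient_arrow ::
  "nat \<Rightarrow> nat \<Rightarrow> (nat \<Rightarrow> int) \<Rightarrow> (nat \<Rightarrow> int) \<Rightarrow> nat list \<Rightarrow> (nat \<Rightarrow> nat) \<Rightarrow> (nat \<Rightarrow> nat) \<Rightarrow> nat \<Rightarrow> nat \<Rightarrow> bool" where
  "orient_arrow m n c r p v h x y \<longleftrightarrow>
     (\<exists>i\<in>{1..m}. in_col v i x \<and> in_col v i y \<and> (if c i = 1 then x < y else y < x)) \<or>
     (\<exists>j\<in>{1..n}. in_row p h j x \<and> in_row p h j y \<and> (if r j = 1 then p!x < p!y else p!y < p!x))"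

text \<open>Gridded M-coil. Points are ordered by ord : {1..L} -> positions, cells labelled
  by lab : {1..ell} -> nonzero cells; ell is the number of non-zero cells (= cycle length).\<close>
definition is_gridded_coil ::
  "nat \<Rightarrow> nat \<Rightarrow> (nat \<Rightarrow> nat \<Rightarrow> int) \<Rightarrow> (nat \<Rightarrow> int) \<Rightarrow> (nat \<Rightarrow> int) \<Rightarrow>
   nat list \<Rightarrow> (nat \<Rightarrow> nat) \<Rightarrow> (nat \<Rightarrow> nat) \<Rightarrow> bool" where
  "is_gridded_coil m n M c r p v h \<longleftrightarrow>
     (let ell = card (nonzero_cells m n M); L = length p; arr = orient_arrow m n c r p v h in
      is_gridding m n M p v h \<and> L > ell \<and>
      (\<exists>ord lab.
         bij_betw ord {1..L} {0..<L} \<and>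
         bij_betw lab {1..ell} (nonzero_cells m n M) \<and>
         (\<forall>i\<in>{1..L}. in_cell p v h (lab (((i - 1) mod ell) + 1)) (ord i)) \<and>
         (\<forall>i. 1 < i \<and> i \<le> L \<longrightarrow> arr (ord (i - 1)) (ord i)) \<and>
         (\<forall>i. ell + 1 < i \<and> i \<le> L \<longrightarrow> arr (ord i) (ord (i - ell - 1))) \<and>
         arr (ord (ell + 1)) (ord 1)))"

definition is_coil ::
  "nat \<Rightarrow> nat \<Rightarrow> (nat \<Rightarrow> nat \<Rightarrow> int) \<Rightarrow> (nat \<Rightarrow> int) \<Rightarrow> (nat \<Rightarrow> int) \<Rightarrow> nat list \<Rightarrow> bool" where
  "is_coil m n M c r p \<longleftrightarrow> is_perm p \<and> (\<exists>v h. is_gridded_coil m n M c r p v h)"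

end

theory Submission
  imports Defs "HOL-Library.Countable"
begin

text \<open>Label every point \<open>v\<^sub>i\<close> of a gridded coil by \<open>i mod \<ell>\<close>, its cell, and whether it is
  the first or the last point: finitely many labels. Let a label-preserving embedding map a coil
  \<open>v\<^sub>1, \<dots>, v\<^sub>L\<close> into a coil \<open>w\<^sub>1, \<dots>, w\<^sub>N\<close>. It preserves cells, hence orientation arrows,
  and by induction it sends \<open>v\<^sub>i\<close> to \<open>w\<^sub>i\<close>: if \<open>v\<^sub>i\<close> goes to \<open>w\<^sub>k\<close>, then
  \<open>w\<^sub>i\<^sub>-\<^sub>1 \<rightarrow> w\<^sub>k\<close> and \<open>w\<^sub>k \<rightarrow> w\<^sub>i\<^sub>-\<^sub>\<ell>\<^sub>-\<^sub>1\<close>. The cells of \<open>v\<^sub>i\<close> and \<open>v\<^sub>i\<^sub>-\<^sub>1\<close> are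
  distinct and share a column or a row; the coordinate along that line, read in its orientation,
  increases along every arrow between the two cells, so by (C3) followed by (C2) it decreases
  along \<open>w\<^sub>i, w\<^sub>i\<^sub>+\<^sub>\<ell>, w\<^sub>i\<^sub>+\<^sub>2\<^sub>\<ell>, \<dots>\<close>, which leaves \<open>k = i\<close> as the only possibility.
  Thus the last point goes to the last point and \<open>L = N\<close>, and coils of increasing length form an
  infinite antichain of labelled permutations whose labels come from a finite set ordered by
  equality, which is a wqo.\<close>

lemma monotone_partition_index_unique:
  fixes f :: "nat \<Rightarrow> nat"
  assumes mono: "\<forall>i<m. f i \<le> f (Suc i)"
    and a: "a \<in> {1..m}" and b: "b \<in> {1..m}"
    and "f (a - 1) \<le> x" "x < f a" "f (b - 1) \<le> x" "x < f b"
  shows "a = b"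
proof (rule ccontr)
  have le: "f i \<le> f j" if "i \<le> j" "j \<le> m" for i j
    using that(1) by (induction rule: dec_induct) (use mono that(2) in \<open>auto intro: order.trans\<close>)
  assume "a \<noteq> b"
  then have "f a \<le> f (b - 1) \<or> f b \<le> f (a - 1)"
    using le a b by (cases "a < b") auto
  then show False
    using assms by linarith
qed

lemma gridding_in_col_unique:
  assumes "is_gridding m n M p v h" "a \<in> {1..m}" "b \<in> {1..m}" "in_col v a x" "in_col v b x"
  shows "a = b"
  using monotone_partition_index_unique[of m v a b x] assms
  unfolding is_gridding_def in_col_def by blast

lemma gridding_in_row_unique:
  assumes "is_gridding m n M p v h" "a \<in> {1..n}" "b \<in> {1..n}" "in_row p h a x" "in_row p h b x"
  shows "a = b"
  using monotone_partition_index_unique[of n h a b "p ! x"] assms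
  unfolding is_gridding_def in_row_def by blast

text \<open>Two distinct cells joined by an orientation arrow lie in a common column or a common row;
  this is the coordinate of a point along that line, in the line's orientation.\<close>
definition line_coordinate ::
  "nat list \<Rightarrow> (nat \<Rightarrow> int) \<Rightarrow> (nat \<Rightarrow> int) \<Rightarrow> nat \<times> nat \<Rightarrow> nat \<times> nat \<Rightarrow> nat \<Rightarrow> int" where
  "line_coordinate p c r X Y x =
     (if fst X = fst Y then (if c (fst X) = 1 then int x else - int x)
      else (if r (snd X) = 1 then int (p ! x) else - int (p ! x)))"

lemma orient_arrow_line_coordinate_less:
  assumes grid: "is_gridding m n M p v h" and "X \<noteq> Y"
    and X: "X \<in> {1..m} \<times> {1..n}" and Y: "Y \<in> {1..m} \<times> {1..n}"
    and cells: "in_cell p v h X x \<and> in_cell p v h Y y \<or> in_cell p v h Y x \<and> in_cell p v h X y"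
    and "orient_arrow m n c r p v h x y"
  shows "line_coordinate p c r X Y x < line_coordinate p c r X Y y"
  using \<open>orient_arrow m n c r p v h x y\<close> unfolding orient_arrow_def
proof (elim disjE bexE conjE)
  fix i assume i: "i \<in> {1..m}" "in_col v i x" "in_col v i y" "if c i = 1 then x < y else y < x"
  have "fst Z = i" if "Z \<in> {X, Y}" for Z
    using that cells X Y gridding_in_col_unique[OF grid _ i(1) _ i(2)]
      gridding_in_col_unique[OF grid _ i(1) _ i(3)] unfolding in_cell_def by fastforce
  then show ?thesis
    using i(4) unfolding line_coordinate_def by auto
next
  fix j assume j: "j \<in> {1..n}" "in_row p h j x" "in_row p h j y"
    "if r j = 1 then p ! x < p ! y else p ! y < p ! x"
  have "snd Z = j" if "Z \<in> {X, Y}" for Z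
    using that cells X Y gridding_in_row_unique[OF grid _ j(1) _ j(2)]
      gridding_in_row_unique[OF grid _ j(1) _ j(3)] unfolding in_cell_def by fastforce
  then have "snd X = j" "snd Y = j"
    by auto
  moreover from this \<open>X \<noteq> Y\<close> have "fst X \<noteq> fst Y"
    by (auto simp: prod_eq_iff)
  ultimately show ?thesis
    using j(4) unfolding line_coordinate_def by auto
qed

lemma orient_arrow_embedding:
  assumes grid: "is_gridding m n M p v h" and e: "embedding p q e"
    and "x < length p" "y < length p"
    and X: "X \<in> {1..m} \<times> {1..n}" and Y: "Y \<in> {1..m} \<times> {1..n}"
    and "in_cell p v h X x" "in_cell q v' h' X (e x)"
    and "in_cell p v h Y y" "in_cell q v' h' Y (e y)"
    and "orient_arrow m n c r p v h x y"
  shows "orient_arrow m n c r q v' h' (e x) (e y)"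
  using \<open>orient_arrow m n c r p v h x y\<close>[unfolded orient_arrow_def]
proof (elim disjE bexE conjE)
  fix i assume i: "i \<in> {1..m}" "in_col v i x" "in_col v i y" "if c i = 1 then x < y else y < x"
  have "i = fst X" "i = fst Y"
    using gridding_in_col_unique[OF grid i(1) _ i(2)] gridding_in_col_unique[OF grid i(1) _ i(3)]
      assms(7,9) X Y unfolding in_cell_def by auto
  then have "in_col v' i (e x)" "in_col v' i (e y)"
    using assms(8,10) unfolding in_cell_def by auto
  moreover have "if c i = 1 then e x < e y else e y < e x"
    using i(4) e \<open>x < length p\<close> \<open>y < length p\<close> unfolding embedding_def by (auto split: if_splits)
  ultimately show ?thesis
    using i(1) unfolding orient_arrow_def by blast
next
  fix j assume j: "j \<in> {1..n}" "in_row p h j x" "in_row p h j y"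
    "if r j = 1 then p ! x < p ! y else p ! y < p ! x"
  have "j = snd X" "j = snd Y"
    using gridding_in_row_unique[OF grid j(1) _ j(2)] gridding_in_row_unique[OF grid j(1) _ j(3)]
      assms(7,9) X Y unfolding in_cell_def by auto
  then have "in_row q h' j (e x)" "in_row q h' j (e y)"
    using assms(8,10) unfolding in_cell_def by auto
  moreover have "if r j = 1 then q ! e x < q ! e y else q ! e y < q ! e x"
    using j(4) e \<open>x < length p\<close> \<open>y < length p\<close> unfolding embedding_def by (auto split: if_splits)
  ultimately show ?thesis
    using j(1) unfolding orient_arrow_def by blast
qed

lemma mod_eq_less_obtain_nat:
  fixes a b n :: nat
  assumes "a mod n = b mod n" "a < b"
  obtains s where "b = a + n * Suc s"
proof -
  obtain s where "b = a + n * s"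
    using mod_eq_nat2E[OF assms(1)] assms(2) by (meson less_imp_le)
  moreover from this assms(2) have "s \<noteq> 0"
    by auto
  ultimately show thesis
    using that by (metis not0_implies_Suc)
qed

text \<open>A gridded coil with its order reindexed from 0: \<open>pt j\<close> is \<open>v\<^sub>j\<^sub>+\<^sub>1\<close> and \<open>cl a\<close> is the cell
  labelled \<open>a + 1\<close>, so that (C1)--(C3) take the form of the last three assumptions.\<close>
locale indexed_coil =
  fixes m n :: nat and M :: "nat \<Rightarrow> nat \<Rightarrow> int" and c r :: "nat \<Rightarrow> int"
    and p :: "nat list" and v h :: "nat \<Rightarrow> nat"
    and ell :: nat and pt :: "nat \<Rightarrow> nat" and cl :: "nat \<Rightarrow> nat \<times> nat"
  assumes gridding: "is_gridding m n M p v h"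
    and ell_ge2: "2 \<le> ell"
    and ell_less_length: "ell < length p"
    and pt_bij: "bij_betw pt {..<length p} {..<length p}"
    and cl_inj: "inj_on cl {..<ell}"
    and cl_cells: "cl ` {..<ell} \<subseteq> {1..m} \<times> {1..n}"
    and pt_in_cell: "j < length p \<Longrightarrow> in_cell p v h (cl (j mod ell)) (pt j)"
    and arrow_next: "Suc j < length p \<Longrightarrow> orient_arrow m n c r p v h (pt j) (pt (Suc j))"
    and arrow_back:
      "Suc (j + ell) < length p \<Longrightarrow> orient_arrow m n c r p v h (pt (Suc (j + ell))) (pt j)"
begin

abbreviation arrow :: "nat \<Rightarrow> nat \<Rightarrow> bool" where
  "arrow \<equiv> orient_arrow m n c r p v h"

lemma pt_less_length: "j < length p \<Longrightarrow> pt j < length p"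
  using pt_bij unfolding bij_betw_def by auto

lemma cl_mod_in_cells: "cl (j mod ell) \<in> {1..m} \<times> {1..n}"
  using cl_cells ell_ge2 by auto

lemma cl_mod_Suc_neq: "cl (Suc j mod ell) \<noteq> cl (j mod ell)"
proof
  assume "cl (Suc j mod ell) = cl (j mod ell)"
  then have "Suc j mod ell = j mod ell"
    using cl_inj ell_ge2 by (auto dest: inj_onD)
  then show False
    using ell_ge2 by (auto simp: mod_Suc split: if_splits)
qed

abbreviation consecutive_coordinate :: "nat \<Rightarrow> nat \<Rightarrow> int" where
  "consecutive_coordinate j \<equiv> line_coordinate p c r (cl (Suc j mod ell)) (cl (j mod ell))"

lemma pt_Suc_in_cell:
  assumes "Suc t < length p" "t mod ell = j mod ell"
  shows "in_cell p v h (cl (Suc j mod ell)) (pt (Suc t))"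
proof -
  have "Suc t mod ell = Suc j mod ell"
    using assms(2) by (metis mod_Suc_eq)
  then show ?thesis
    using pt_in_cell[OF assms(1)] by simp
qed

lemma consecutive_coordinate_less:
  assumes "in_cell p v h (cl (Suc j mod ell)) x \<and> in_cell p v h (cl (j mod ell)) y \<or>
      in_cell p v h (cl (j mod ell)) x \<and> in_cell p v h (cl (Suc j mod ell)) y"
    and "arrow x y"
  shows "consecutive_coordinate j x < consecutive_coordinate j y"
  using orient_arrow_line_coordinate_less[OF gridding cl_mod_Suc_neq cl_mod_in_cells cl_mod_in_cells]
    assms .

lemma consecutive_coordinate_descent:
  assumes "Suc t + ell * s < length p" "t mod ell = j mod ell"
  shows "consecutive_coordinate j (pt (Suc t + ell * s)) \<le> consecutive_coordinate j (pt (Suc t))"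
  using assms(1)
proof (induction s)
  case (Suc s)
  let ?K = "consecutive_coordinate j" and ?u = "t + ell * s"
  have u: "Suc t + ell * Suc s = Suc (?u + ell)" "?u mod ell = j mod ell"
    using assms(2) by simp_all
  have "?K (pt (Suc (?u + ell))) < ?K (pt ?u)"
    using consecutive_coordinate_less pt_Suc_in_cell[of "?u + ell"] pt_in_cell[of ?u]
      arrow_back[of ?u] u Suc.prems by simp
  also have "\<dots> < ?K (pt (Suc ?u))"
    using consecutive_coordinate_less pt_Suc_in_cell[of ?u] pt_in_cell[of ?u]
      arrow_next[of ?u] u Suc.prems by simp
  also have "\<dots> \<le> ?K (pt (Suc t))"
    using Suc by simp
  finally show ?case
    unfolding u by simp
qed simp

lemma next_index_unique:
  assumes j: "j < length p" and k: "k < length p" "0 < k" "k mod ell = Suc j mod ell"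
    and arrow_to: "arrow (pt j) (pt k)"
    and arrow_from: "ell \<le> j \<Longrightarrow> arrow (pt k) (pt (j - ell))"
  shows "k = Suc j"
proof (rule ccontr)
  assume "k \<noteq> Suc j"
  let ?K = "consecutive_coordinate j"
  obtain k' where "k = Suc k'"
    using k(2) gr0_implies_Suc by blast
  moreover from this k(3) have "k' mod ell = j mod ell"
    by (simp add: mod_Suc split: if_splits)
  ultimately have k': "k = Suc k'" "k' mod ell = j mod ell"
    by simp_all
  have start: "?K (pt j) < ?K (pt k)"
    using consecutive_coordinate_less pt_Suc_in_cell[of k'] pt_in_cell[of j] arrow_to j k k' by simp
  consider "Suc j < k" | "k < Suc j"
    using \<open>k \<noteq> Suc j\<close> by linarith
  then show False
  proof cases
    case 1
    obtain s where "k = Suc j + ell * Suc s"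
      using mod_eq_less_obtain_nat[OF k(3)[symmetric] 1] .
    then have s: "k = Suc (j + ell) + ell * s"
      by simp
    then have "?K (pt k) \<le> ?K (pt (Suc (j + ell)))"
      using consecutive_coordinate_descent[of "j + ell" s] k by simp
    also have "\<dots> < ?K (pt j)"
      using consecutive_coordinate_less pt_Suc_in_cell[of "j + ell"] pt_in_cell[of j]
        arrow_back[of j] j k s by simp
    finally show False
      using start by simp
  next
    case 2
    obtain s where "Suc j = k + ell * Suc s"
      using mod_eq_less_obtain_nat[OF k(3) 2] .
    then have "j = k' + ell * s + ell"
      using k' by simp
    then have t: "ell \<le> j" "Suc (j - ell) = Suc k' + ell * s" "(j - ell) mod ell = j mod ell"
      using k' by simp_all
    have "?K (pt k) < ?K (pt (j - ell))"
      using consecutive_coordinate_less pt_Suc_in_cell[of k'] pt_in_cell[of "j - ell"]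
        arrow_from j k k' t by simp
    also have "\<dots> < ?K (pt (Suc (j - ell)))"
      using consecutive_coordinate_less pt_Suc_in_cell[of "j - ell"] pt_in_cell[of "j - ell"]
        arrow_next[of "j - ell"] j t ell_ge2 by simp
    also have "\<dots> \<le> ?K (pt k)"
      using consecutive_coordinate_descent[of k' s] t j k' ell_ge2 by simp
    finally show False
      by simp
  qed
qed

end

locale index_preserving_embedding =
  P: indexed_coil m n M c r p v h ell ptP clP + Q: indexed_coil m n M c r q v' h' ell ptQ clQ
  for m n M c r p v h ell ptP clP q v' h' ptQ clQ +
  fixes e :: "nat \<Rightarrow> nat"
  assumes embedding: "embedding p q e"
    and index: "j < length p \<Longrightarrow> \<exists>k<length q. e (ptP j) = ptQ k \<and> k mod ell = j mod ell \<and>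
      clQ (k mod ell) = clP (j mod ell) \<and> (k = 0 \<longleftrightarrow> j = 0) \<and> (Suc k = length q \<longleftrightarrow> Suc j = length p)"
begin

lemma image_in_cell: "j < length p \<Longrightarrow> in_cell q v' h' (clP (j mod ell)) (e (ptP j))"
  using index Q.pt_in_cell by metis

lemma image_arrow:
  assumes "a < length p" "b < length p" "P.arrow (ptP a) (ptP b)"
  shows "Q.arrow (e (ptP a)) (e (ptP b))"
  using orient_arrow_embedding[OF P.gridding embedding P.pt_less_length P.pt_less_length
      P.cl_mod_in_cells P.cl_mod_in_cells P.pt_in_cell image_in_cell P.pt_in_cell image_in_cell]
    assms by simp

lemma image_pt: "j < length p \<Longrightarrow> j < length q \<and> e (ptP j) = ptQ j"
proof (induction j rule: less_induct)
  case (less j)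
  obtain k where k: "k < length q" "e (ptP j) = ptQ k" "k mod ell = j mod ell" "k = 0 \<longleftrightarrow> j = 0"
    using index[OF less.prems] by blast
  show ?case
  proof (cases j)
    case 0
    then show ?thesis
      using k by simp
  next
    case (Suc i)
    have IH: "i < length q" "e (ptP i) = ptQ i"
      using less.IH[of i] Suc less.prems by auto
    have "Q.arrow (ptQ i) (ptQ k)"
      using image_arrow[of i j] P.arrow_next[of i] IH k Suc less.prems by simp
    moreover have "Q.arrow (ptQ k) (ptQ (i - ell))" if "ell \<le> i"
    proof -
      have "Suc (i - ell + ell) = j"
        using that Suc by simp
      then have "P.arrow (ptP j) (ptP (i - ell))"
        using P.arrow_back[of "i - ell"] less.prems by simp
      then show ?thesis
        using image_arrow[of j "i - ell"] less.IH[of "i - ell"] k Suc less.prems by simp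
    qed
    ultimately have "k = j"
      using Q.next_index_unique[of i k] IH k Suc by simp
    then show ?thesis
      using k by simp
  qed
qed

lemma length_eq: "length p = length q"
proof -
  define L where "L = length p"
  have "0 < L"
    using P.ell_less_length unfolding L_def by linarith
  then obtain k where k: "k < length q" "e (ptP (L - 1)) = ptQ k"
    "Suc k = length q \<longleftrightarrow> Suc (L - 1) = L"
    using index[of "L - 1"] unfolding L_def by auto
  have "ptQ k = ptQ (L - 1)" "L - 1 < length q"
    using image_pt[of "L - 1"] k \<open>0 < L\<close> unfolding L_def by auto
  then have "k = L - 1"
    using Q.pt_bij k(1) unfolding bij_betw_def by (auto dest: inj_onD)
  then show ?thesis
    using k \<open>0 < L\<close> unfolding L_def by simp
qed

end

definition coil_label :: "nat \<Rightarrow> nat \<Rightarrow> (nat \<Rightarrow> nat) \<Rightarrow> (nat \<Rightarrow> nat \<times> nat) \<Rightarrow> nat \<Rightarrow> nat" where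
  "coil_label ell L pt cl x =
     (let j = the_inv_into {..<L} pt x in to_nat (j mod ell, cl (j mod ell), j = 0, Suc j = L))"

context indexed_coil
begin

lemma coil_label_pt:
  "j < length p \<Longrightarrow>
    coil_label ell (length p) pt cl (pt j) = to_nat (j mod ell, cl (j mod ell), j = 0, Suc j = length p)"
  using pt_bij unfolding coil_label_def bij_betw_def by (simp add: the_inv_into_f_f)

lemma coil_label_in_range:
  "coil_label ell (length p) pt cl x \<in>
    to_nat ` ({..<ell} \<times> ({1..m} \<times> {1..n}) \<times> (UNIV :: (bool \<times> bool) set))"
  unfolding coil_label_def Let_def using cl_mod_in_cells ell_ge2 by (intro imageI) auto

end

lemma coil_label_preserving_embedding:
  assumes P: "indexed_coil m n M c r p v h ell ptP clP"
    and Q: "indexed_coil m n M c r q v' h' ell ptQ clQ"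
    and e: "embedding p q e"
    and labels: "\<forall>x<length p. coil_label ell (length p) ptP clP x = coil_label ell (length q) ptQ clQ (e x)"
  shows "index_preserving_embedding m n M c r p v h ell ptP clP q v' h' ptQ clQ e"
proof (intro index_preserving_embedding.intro index_preserving_embedding_axioms.intro P Q e)
  interpret P: indexed_coil m n M c r p v h ell ptP clP by (rule P)
  interpret Q: indexed_coil m n M c r q v' h' ell ptQ clQ by (rule Q)
  fix j
  assume j: "j < length p"
  have "e (ptP j) < length q"
    using e P.pt_less_length[OF j] unfolding embedding_def by blast
  then obtain k where k: "k < length q" "e (ptP j) = ptQ k"
    using Q.pt_bij unfolding bij_betw_def by (metis imageE lessThan_iff)
  then show "\<exists>k<length q. e (ptP j) = ptQ k \<and> k mod ell = j mod ell \<and>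
      clQ (k mod ell) = clP (j mod ell) \<and> (k = 0 \<longleftrightarrow> j = 0) \<and> (Suc k = length q \<longleftrightarrow> Suc j = length p)"
    using labels P.pt_less_length[OF j] P.coil_label_pt[OF j] Q.coil_label_pt[OF k(1)] by auto
qed

lemma rc_graph_is_cycle_card_nonzero_cells:
  assumes "rc_graph_is_cycle m n M"
  shows "2 \<le> card (nonzero_cells m n M)"
proof -
  obtain w and k :: nat where k: "3 \<le> k" and w: "inj_on w {0..<k}"
    and E: "\<forall>x y. rc_edge m n M x y \<longleftrightarrow>
      (\<exists>i<k. (x = w i \<and> y = w ((i + 1) mod k)) \<or> (y = w i \<and> x = w ((i + 1) mod k)))"
    using assms unfolding rc_graph_is_cycle_def is_cycle_graph_def bij_betw_def by blast
  have edge_cell: "\<exists>a b. (a, b) \<in> nonzero_cells m n M \<and> {w i, w (Suc i)} = {Inl a, Inr b}"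
    if "Suc i < k" for i
  proof -
    have "rc_edge m n M (w i) (w (Suc i))"
      unfolding E[rule_format] using that by (intro exI[of _ i]) auto
    then show ?thesis
      unfolding rc_edge_def nonzero_cells_def by (force simp: insert_commute)
  qed
  obtain a b a' b' where cells: "(a, b) \<in> nonzero_cells m n M" "(a', b') \<in> nonzero_cells m n M"
    and ends: "{w 0, w 1} = {Inl a, Inr b}" "{w 1, w 2} = {Inl a', Inr b'}"
    using edge_cell[of 0] edge_cell[of 1] k by (auto simp: numeral_2_eq_2)
  have "w 0 \<noteq> w 1" "w 0 \<noteq> w 2"
    using w k by (auto dest: inj_onD)
  have "(a, b) \<noteq> (a', b')"
  proof
    assume "(a, b) = (a', b')"
    then have "{w 0, w 1} = {w 1, w 2}"
      using ends by simp
    then show False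
      using \<open>w 0 \<noteq> w 1\<close> \<open>w 0 \<noteq> w 2\<close> by (auto simp: doubleton_eq_iff)
  qed
  moreover have "finite (nonzero_cells m n M)"
    by (rule finite_subset[of _ "{1..m} \<times> {1..n}"]) (auto simp: nonzero_cells_def)
  ultimately show ?thesis
    using cells card_mono[of "nonzero_cells m n M" "{(a, b), (a', b')}"] by simp
qed

lemma indexed_coil_of_coil:
  assumes "is_coil m n M c r p" and "rc_graph_is_cycle m n M"
  shows "\<exists>v h pt cl. indexed_coil m n M c r p v h (card (nonzero_cells m n M)) pt cl"
proof -
  define ell where "ell = card (nonzero_cells m n M)"
  define L where "L = length p"
  obtain v h ord lab where
    ord: "bij_betw ord {1..L} {0..<L}" and lab: "bij_betw lab {1..ell} (nonzero_cells m n M)"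
    and cell: "\<forall>i\<in>{1..L}. in_cell p v h (lab ((i - 1) mod ell + 1)) (ord i)"
    and forward: "\<forall>i. 1 < i \<and> i \<le> L \<longrightarrow> orient_arrow m n c r p v h (ord (i - 1)) (ord i)"
    and backward: "\<forall>i. ell + 1 < i \<and> i \<le> L \<longrightarrow> orient_arrow m n c r p v h (ord i) (ord (i - ell - 1))"
    and grid: "is_gridding m n M p v h" and "ell < L"
    using assms(1) unfolding is_coil_def is_gridded_coil_def Let_def ell_def L_def by blast
  have shift: "{1..L} = Suc ` {..<L}" "{1..ell} = Suc ` {..<ell}"
    by (auto simp: image_iff Suc_le_eq gr0_conv_Suc)
  have "bij_betw (ord \<circ> Suc) {..<L} {..<L}"
    using bij_betw_trans[of Suc "{..<L}" "{1..L}" ord "{0..<L}"] ord shift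
    by (simp add: bij_betw_def atLeast0LessThan)
  moreover have "inj_on (lab \<circ> Suc) {..<ell}"
    using bij_betw_imp_inj_on[OF lab] shift by (simp add: comp_inj_on)
  moreover have "(lab \<circ> Suc) ` {..<ell} = nonzero_cells m n M"
    using lab shift by (simp add: bij_betw_def image_comp)
  then have "(lab \<circ> Suc) ` {..<ell} \<subseteq> {1..m} \<times> {1..n}"
    unfolding nonzero_cells_def by auto
  moreover have "in_cell p v h ((lab \<circ> Suc) (j mod ell)) ((ord \<circ> Suc) j)" if "j < L" for j
    using bspec[OF cell, of "Suc j"] that by simp
  moreover have "orient_arrow m n c r p v h ((ord \<circ> Suc) j) ((ord \<circ> Suc) (Suc j))" if "Suc j < L" for j
    using forward that by (auto dest: spec[of _ "Suc (Suc j)"])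
  moreover have "orient_arrow m n c r p v h ((ord \<circ> Suc) (Suc (j + ell))) ((ord \<circ> Suc) j)"
    if "Suc (j + ell) < L" for j
    using backward that by (auto dest: spec[of _ "Suc (Suc (j + ell))"])
  ultimately have "indexed_coil m n M c r p v h ell (ord \<circ> Suc) (lab \<circ> Suc)"
    using grid \<open>ell < L\<close> rc_graph_is_cycle_card_nonzero_cells[OF assms(2)]
    unfolding indexed_coil_def ell_def L_def by blast
  then show ?thesis
    unfolding ell_def by blast
qed

lemma length_increasing_sequence:
  assumes "\<forall>N. \<exists>p\<in>A. N \<le> length p"
  obtains s :: "nat \<Rightarrow> 'a list"
  where "\<And>k. s k \<in> A" "\<And>i j. i < j \<Longrightarrow> length (s i) < length (s j)"
proof -
  from assms have "\<forall>N. \<exists>p. p \<in> A \<and> N \<le> length p"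
    by blast
  from choice[OF this] obtain f where f: "\<And>N. f N \<in> A \<and> N \<le> length (f N)"
    by blast
  define s where "s = rec_nat (f 0) (\<lambda>_ p. f (Suc (length p)))"
  have s_Suc: "s (Suc k) = f (Suc (length (s k)))" for k
    unfolding s_def by simp
  show thesis
  proof (rule that)
    show "s k \<in> A" for k
      using f by (cases k) (simp_all add: s_Suc, simp add: s_def)
    have step: "length (s k) < length (s (Suc k))" for k
      using f[of "Suc (length (s k))"] s_Suc by simp
    show "length (s i) < length (s j)" if "i < j" for i j
      using lift_Suc_mono_less[of "\<lambda>k. length (s k)", OF step that] .
  qed
qed

lemma wqo_nat_kernel:
  assumes "finite (range g)"
  shows "wqo_nat (\<lambda>x y. g x = g y)"
  unfolding wqo_nat_def quasi_order_on_nat_def good_on_def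
proof (intro conjI allI impI)
  fix F :: "nat \<Rightarrow> nat"
  have "finite (range (g \<circ> F))"
    using assms by (rule finite_subset[rotated]) auto
  then have "\<not> inj (g \<circ> F)"
    using finite_imageD infinite_UNIV_nat by blast
  then obtain i j where "i \<noteq> j" "g (F i) = g (F j)"
    unfolding inj_def by auto
  then show "\<exists>i j. i < j \<and> g (F i) = g (F j)"
    by (metis linorder_neqE_nat)
qed auto

lemma labelled_wqo_finite_labels:
  fixes S :: "nat set" and s :: "nat \<Rightarrow> nat list" and a :: "nat \<Rightarrow> nat \<Rightarrow> nat"
  assumes "labelled_wqo C" and "finite S"
    and "\<And>k. s k \<in> C" and "\<And>k x. x < length (s k) \<Longrightarrow> a k x \<in> S"
  obtains i j f where "i < j" "embedding (s i) (s j) f" "\<forall>x<length (s i). a i x = a j (f x)"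
proof -
  define g where "g x = (if x \<in> S then x else 0)" for x :: nat
  have "range g \<subseteq> insert 0 S"
    unfolding g_def by auto
  then have "finite (range g)"
    using \<open>finite S\<close> finite_subset by blast
  then have "good_on (labelled_elems C) (labelled_le (\<lambda>x y. g x = g y))"
    using assms(1) wqo_nat_kernel unfolding labelled_wqo_def by blast
  moreover have "(s k, a k) \<in> labelled_elems C" for k
    using assms(3) unfolding labelled_elems_def by simp
  ultimately obtain i j where "i < j" "labelled_le (\<lambda>x y. g x = g y) (s i, a i) (s j, a j)"
    unfolding good_on_def by (auto dest: spec[of _ "\<lambda>k. (s k, a k)"])
  then obtain f where f: "embedding (s i) (s j) f"
    and g_eq: "\<forall>x<length (s i). g (a i x) = g (a j (f x))"
    unfolding labelled_le_def by auto
  have "a i x = a j (f x)" if x: "x < length (s i)" for x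
  proof -
    have "a i x \<in> S" "a j (f x) \<in> S"
      using assms(4) x f unfolding embedding_def by blast+
    then show ?thesis
      using g_eq[rule_format, OF x] unfolding g_def by simp
  qed
  then show thesis
    using that \<open>i < j\<close> f by blast
qed

lemma indexed_coils_not_labelled_wqo:
  fixes s :: "nat \<Rightarrow> nat list"
  assumes "\<And>k. s k \<in> C"
    and coil: "\<And>k. indexed_coil m n M c r (s k) (v k) (h k) ell (pt k) (cl k)"
    and "\<And>i j. i < j \<Longrightarrow> length (s i) < length (s j)"
  shows "\<not> labelled_wqo C"
proof
  assume wqo: "labelled_wqo C"
  define a where "a k = coil_label ell (length (s k)) (pt k) (cl k)" for k
  define S where "S = to_nat ` ({..<ell} \<times> ({1..m} \<times> {1..n}) \<times> (UNIV :: (bool \<times> bool) set))"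
  have "finite S"
    unfolding S_def by simp
  moreover note assms(1)
  moreover have "a k x \<in> S" if "x < length (s k)" for k x
    unfolding a_def S_def by (rule indexed_coil.coil_label_in_range[OF coil])
  ultimately obtain i j f where "i < j" and f: "embedding (s i) (s j) f"
    and labels: "\<forall>x<length (s i). a i x = a j (f x)"
    by (rule labelled_wqo_finite_labels[OF wqo]) blast
  have "length (s i) = length (s j)"
    using index_preserving_embedding.length_eq[OF coil_label_preserving_embedding[OF coil coil f]] labels
    unfolding a_def by simp
  then show False
    using assms(3)[OF \<open>i < j\<close>] by simp
qed

theorem proposition4p12:
  fixes C :: "nat list set" and m n :: nat and M :: "nat \<Rightarrow> nat \<Rightarrow> int"
    and c r :: "nat \<Rightarrow> int"
  assumes "perm_class C"
    and "partial_mult_matrix m n M c r"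
    and "rc_graph_is_cycle m n M"
    and "\<forall>N. \<exists>p\<in>C. is_coil m n M c r p \<and> N \<le> length p"
  shows "\<not> labelled_wqo C"
proof -
  have "\<forall>N. \<exists>p\<in>{p \<in> C. is_coil m n M c r p}. N \<le> length p"
    using assms(4) by auto
  then obtain s :: "nat \<Rightarrow> nat list" where s: "\<And>k. s k \<in> {p \<in> C. is_coil m n M c r p}"
    and s_length: "\<And>i j. i < j \<Longrightarrow> length (s i) < length (s j)"
    by (rule length_increasing_sequence) blast
  have "\<exists>v h pt cl. indexed_coil m n M c r (s k) v h (card (nonzero_cells m n M)) pt cl" for k
    using s[of k] assms(3) by (simp add: indexed_coil_of_coil)
  then obtain v h pt cl
    where "\<And>k. indexed_coil m n M c r (s k) (v k) (h k) (card (nonzero_cells m n M)) (pt k) (cl k)"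
    by metis
  then show ?thesis
    using s s_length by (intro indexed_coils_not_labelled_wqo) auto
qed

end
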